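(* Let $\mu$ be a probability distribution supported in the unit square $[0,1]^2$, let $\mu_n$ be an empirical distribution of $\mu$ on $n$ samples, let $\alpha\ge 0$, and let $\mathcal{G}$ be a grid partitioning $[0,1]^2$ into axis-aligned square cells of side length $n^{-\alpha}$. Then with high probability $\mathrm{Exc}_\mu(\mathcal{G})=\tilde O(n^{\alpha-1/2})$.
   Context: For a cell $\Box$ of $\mathcal{G}$, $\mu(\Box)$ and $\mu_n(\Box)$ denote the mass of $\mu$ and $\mu_n$ in $\Box$. The excess of a cell is $\mathrm{Exc}_\mu(\Box)=\max\{0,\mu(\Box)-\mu_n(\Box)\}$ and the excess of the grid is $\mathrm{Exc}_\mu(\mathcal{G})=\sum_{\Box\in\mathcal{G}}\mathrm{Exc}_\mu(\Box)$. An empirical distribution $\mu_n$ is $\frac1n\sum_{i=1}^n\delta_{x_i}$ with $x_1,\dots,x_n$ i.i.d. from $\mu$. $\tilde O(\cdot)$ hides polylogarithmic factors in $n$; "with high probability" means with probability at least $1-n^{-c}$ for some constant $c>0$. *)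

theory Defs
  imports "HOL-Probability.Probability"
begin

text \<open>Coordinate t in [0,1] lies in
  column i iff i*s < t \<le> (i+1)*s (with t = 0 in column 0); there are
  K = ceil(1/s) columns, the last one possibly truncated at 1.\<close>

definition grid_K :: "real \<Rightarrow> nat" where
  "grid_K s = nat \<lceil>1 / s\<rceil>"

definition cell_idx :: "real \<Rightarrow> real \<Rightarrow> nat" where
  "cell_idx s t = nat (\<lceil>t / s\<rceil> - 1)"

definition grid_cell :: "real \<Rightarrow> nat \<times> nat \<Rightarrow> (real \<times> real) set" where
  "grid_cell s ij = {p. p \<in> {0..1} \<times> {0..1} \<and> (cell_idx s (fst p), cell_idx s (snd p)) = ij}"

definition emp_mass :: "nat \<Rightarrow> (nat \<Rightarrow> 'a) \<Rightarrow> 'a set \<Rightarrow> real" where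
  "emp_mass n x A = real (card {i \<in> {..<n}. x i \<in> A}) / real n"

definition grid_excess :: "(real \<times> real) measure \<Rightarrow> nat \<Rightarrow> (nat \<Rightarrow> real \<times> real) \<Rightarrow> real \<Rightarrow> real" where
  "grid_excess \<mu> n x s =
     (\<Sum>ij \<in> {..<grid_K s} \<times> {..<grid_K s}.
        max 0 (measure \<mu> (grid_cell s ij) - emp_mass n x (grid_cell s ij)))"

end

theory Submission
  imports Defs
begin

text \<open>If \<open>U\<close> is the union of the cells in which \<open>\<mu>\<close> exceeds \<open>\<mu>\<^sub>n\<close>, the excess of the grid
  is \<open>\<mu>(U) - \<mu>\<^sub>n(U)\<close>. For each of the \<open>2^(K^2)\<close> unions of cells, Hoeffding's inequality
  bounds the probability that \<open>\<mu>\<^sub>n(U) \<le> \<mu>(U) - t\<close> by \<open>exp(-2nt^2)\<close>. With \<open>K \<le> 2n^\<alpha>\<close>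
  and \<open>t = 2n^(\<alpha>-1/2) ln n\<close>, the union bound gives a failure probability of at most
  \<open>exp(4n^(2\<alpha>) - 8n^(2\<alpha>) (ln n)^2) \<le> 1/n\<close>.\<close>

lemma cell_idx_measurable [measurable]: "cell_idx s \<in> borel \<rightarrow>\<^sub>M count_space UNIV"
  unfolding cell_idx_def by measurable

lemma grid_cell_sets_borel [measurable]: "grid_cell s ij \<in> sets borel"
proof -
  obtain i j where ij: "ij = (i, j)" by (cases ij)
  have "grid_cell s ij = {p \<in> space (borel \<Otimes>\<^sub>M borel). fst p \<in> {0..1} \<and> snd p \<in> {0..1}
          \<and> cell_idx s (fst p) = i \<and> cell_idx s (snd p) = j}"
    unfolding grid_cell_def ij by (auto simp: space_pair_measure)
  also have "\<dots> \<in> sets (borel \<Otimes>\<^sub>M (borel :: real measure))" by measurable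
  finally show ?thesis by (metis borel_prod)
qed

lemma disjoint_family_on_grid_cell: "disjoint_family_on (grid_cell s) S"
  unfolding disjoint_family_on_def grid_cell_def by auto

lemma emp_mass_eq_average: "emp_mass n x A = (\<Sum>i<n. indicator A (x i)) / real n"
proof -
  have "real (card {i \<in> {..<n}. x i \<in> A}) = (\<Sum>i<n. indicator A (x i))"
    by (simp add: sum.If_cases indicator_def Int_def)
  then show ?thesis unfolding emp_mass_def by simp
qed

lemma emp_mass_measurable [measurable]:
  assumes "A \<in> sets M"
  shows "(\<lambda>x. emp_mass n x A) \<in> borel_measurable (PiM {..<n} (\<lambda>_. M))"
  unfolding emp_mass_eq_average using assms by measurable

lemma emp_mass_UN_disjoint:
  assumes "finite T" and "disjoint_family_on F T"
  shows "emp_mass n x (\<Union>(F ` T)) = (\<Sum>j\<in>T. emp_mass n x (F j))"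
proof -
  have "{i \<in> {..<n}. x i \<in> \<Union>(F ` T)} = (\<Union>j\<in>T. {i \<in> {..<n}. x i \<in> F j})" by auto
  moreover have "card (\<Union>j\<in>T. {i \<in> {..<n}. x i \<in> F j}) = (\<Sum>j\<in>T. card {i \<in> {..<n}. x i \<in> F j})"
    using assms by (intro card_UN_disjoint') (auto simp: disjoint_family_on_def)
  ultimately show ?thesis unfolding emp_mass_def by (simp add: sum_divide_distrib)
qed

lemma indep_vars_PiM_components:
  assumes "finite I" and "I \<noteq> {}" and M: "\<And>i. i \<in> I \<Longrightarrow> prob_space (M i)"
  shows "prob_space.indep_vars (PiM I M) M (\<lambda>i x. x i) I"
proof -
  interpret P: prob_space "PiM I M" by (intro prob_space_PiM M)
  have "distr (PiM I M) (PiM I M) (\<lambda>x. \<lambda>i\<in>I. x i) = distr (PiM I M) (PiM I M) (\<lambda>x. x)"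
    by (intro distr_cong) (auto simp: space_PiM)
  also have "\<dots> = PiM I (\<lambda>i. distr (PiM I M) (M i) (\<lambda>x. x i))"
    by (auto intro!: PiM_cong simp: distr_PiM_component M)
  finally show ?thesis
    using \<open>I \<noteq> {}\<close> by (subst P.indep_vars_iff_distr_eq_PiM') auto
qed

lemma prob_emp_mass_le_measure_minus:
  assumes M: "prob_space M" and A: "A \<in> sets M" and "n > 0" and "t \<ge> 0"
  shows "measure (PiM {..<n} (\<lambda>_. M))
           {x \<in> space (PiM {..<n} (\<lambda>_. M)). emp_mass n x A \<le> measure M A - t}
         \<le> exp (- 2 * real n * t\<^sup>2)"
proof -
  let ?P = "PiM {..<n} (\<lambda>_. M)"
  let ?X = "\<lambda>i x. indicator A (x i) :: real"
  interpret P: prob_space ?P by (intro prob_space_PiM M)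
  have marginal: "distr ?P M (\<lambda>x. x i) = M" if "i < n" for i
    using that by (simp add: distr_PiM_component[of "{..<n}" "\<lambda>_. M"] M)
  have distr_X: "distr ?P borel (?X i) = distr M borel (indicator A)" if "i < n" for i
  proof -
    have "distr ?P borel (?X i) = distr (distr ?P M (\<lambda>x. x i)) borel (indicator A)"
      using A that by (subst distr_distr) (auto simp: comp_def)
    then show ?thesis using that by (simp add: marginal)
  qed
  interpret H: Hoeffding_ineq_iid ?P "{..<n}" ?X "?X 0" 0 1 "P.expectation (?X 0)"
  proof unfold_locales
    show "P.indep_vars (\<lambda>_. borel) ?X {..<n}"
      using \<open>n > 0\<close> A
      by (intro P.indep_vars_compose2[OF indep_vars_PiM_components]) (auto simp: M)
  next
    show "P.random_variable borel (?X 0)"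
      using A \<open>n > 0\<close> by (intro measurable_compose[OF measurable_component_singleton]) auto
  next
    show "AE x in ?P. ?X 0 x \<in> {0..1}" by (auto split: split_indicator)
  next
    show "distr ?P borel (?X i) = distr ?P borel (?X 0)" if "i \<in> {..<n}" for i
      using distr_X[of i] distr_X[of 0] that \<open>n > 0\<close> by simp
  qed simp
  have "P.expectation (?X 0) = integral\<^sup>L (distr ?P M (\<lambda>x. x 0)) (indicator A)"
    using A \<open>n > 0\<close> by (intro integral_distr[symmetric]) auto
  also have "\<dots> = integral\<^sup>L M (indicator A)"
    using \<open>n > 0\<close> by (simp add: marginal)
  also have "\<dots> = measure M A" using A by simp
  finally have expectation: "P.expectation (?X 0) = measure M A" .
  have "P.prob {x \<in> space ?P. (\<Sum>i\<in>{..<n}. ?X i x) / real (card {..<n}) \<le> P.expectation (?X 0) - t}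
          \<le> exp (- 2 * real (card {..<n}) * t\<^sup>2 / (1 - 0)\<^sup>2)"
    using \<open>n > 0\<close> \<open>t \<ge> 0\<close> by (intro H.Hoeffding_ineq_le') auto
  then show ?thesis
    by (simp only: emp_mass_eq_average expectation card_lessThan) simp
qed

lemma sum_positive_deficit_eq_deficit_Union:
  fixes F :: "'i \<Rightarrow> 'a set" and n :: nat and x :: "nat \<Rightarrow> 'a"
  assumes "finite_measure M" and "finite I" and "disjoint_family_on F I"
    and "\<And>i. i \<in> I \<Longrightarrow> F i \<in> sets M"
  defines "T \<equiv> {i \<in> I. emp_mass n x (F i) < measure M (F i)}"
  shows "(\<Sum>i\<in>I. max 0 (measure M (F i) - emp_mass n x (F i)))
           = measure M (\<Union>(F ` T)) - emp_mass n x (\<Union>(F ` T))"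
proof -
  interpret finite_measure M by fact
  have T: "finite T" "T \<subseteq> I" "disjoint_family_on F T"
    using assms(2,3) by (auto simp: T_def disjoint_family_on_def)
  have "(\<Sum>i\<in>I. max 0 (measure M (F i) - emp_mass n x (F i)))
          = (\<Sum>i\<in>T. measure M (F i) - emp_mass n x (F i))"
    unfolding T_def using \<open>finite I\<close> by (subst sum.inter_filter) (auto intro!: sum.cong)
  also have "\<dots> = measure M (\<Union>(F ` T)) - emp_mass n x (\<Union>(F ` T))"
    using T assms(4)
    by (subst finite_measure_finite_Union) (auto simp: sum_subtractf emp_mass_UN_disjoint)
  finally show ?thesis .
qed

lemma grid_excess_measurable:
  assumes "sets M = sets borel"
  shows "(\<lambda>x. grid_excess M n x s) \<in> borel_measurable (PiM {..<n} (\<lambda>_. M))"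
  unfolding grid_excess_def using assms by measurable

lemma prob_grid_excess_gt_le:
  assumes M: "prob_space M" and sets_M: "sets M = sets borel" and "n > 0" and "t \<ge> 0"
  shows "measure (PiM {..<n} (\<lambda>_. M))
           {x \<in> space (PiM {..<n} (\<lambda>_. M)). grid_excess M n x s > t}
         \<le> 2 ^ (grid_K s * grid_K s) * exp (- 2 * real n * t\<^sup>2)"
proof -
  let ?P = "PiM {..<n} (\<lambda>_. M)"
  define I where "I = {..<grid_K s} \<times> {..<grid_K s}"
  define U where "U = (\<lambda>T. \<Union>(grid_cell s ` T))"
  define E where "E = (\<lambda>T. {x \<in> space ?P. emp_mass n x (U T) \<le> measure M (U T) - t})"
  interpret P: prob_space ?P by (intro prob_space_PiM M)
  have finI: "finite I" by (simp add: I_def)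
  have U_sets: "U T \<in> sets M" if "T \<subseteq> I" for T
    using that finI sets_M by (auto simp: U_def dest: finite_subset)
  have E_sets: "E T \<in> sets ?P" if "T \<subseteq> I" for T
    using U_sets[OF that] by (simp add: E_def)
  have "{x \<in> space ?P. grid_excess M n x s > t} \<subseteq> (\<Union>T\<in>Pow I. E T)"
  proof
    fix x assume x: "x \<in> {x \<in> space ?P. grid_excess M n x s > t}"
    define T where "T = {ij \<in> I. emp_mass n x (grid_cell s ij) < measure M (grid_cell s ij)}"
    have "grid_excess M n x s = measure M (U T) - emp_mass n x (U T)"
      unfolding grid_excess_def U_def T_def I_def
      using M sets_M disjoint_family_on_grid_cell
      by (intro sum_positive_deficit_eq_deficit_Union) (auto simp: prob_space.finite_measure)
    then have "x \<in> E T"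
      using x by (simp add: E_def)
    moreover have "T \<in> Pow I" by (auto simp: T_def)
    ultimately show "x \<in> (\<Union>T\<in>Pow I. E T)" by blast
  qed
  then have "P.prob {x \<in> space ?P. grid_excess M n x s > t} \<le> P.prob (\<Union>T\<in>Pow I. E T)"
    using E_sets finI by (intro P.finite_measure_mono) auto
  also have "\<dots> \<le> (\<Sum>T\<in>Pow I. P.prob (E T))"
    using E_sets finI by (intro P.finite_measure_subadditive_finite) auto
  also have "\<dots> \<le> (\<Sum>T\<in>Pow I. exp (- 2 * real n * t\<^sup>2))"
    unfolding E_def using U_sets M \<open>n > 0\<close> \<open>t \<ge> 0\<close>
    by (intro sum_mono prob_emp_mass_le_measure_minus) auto
  also have "\<dots> = 2 ^ (grid_K s * grid_K s) * exp (- 2 * real n * t\<^sup>2)"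
    using finI by (simp add: card_Pow I_def card_cartesian_product)
  finally show ?thesis .
qed

lemma grid_K_le:
  assumes "0 < s" and "s \<le> 1"
  shows "real (grid_K s) \<le> 2 / s"
proof -
  have "real (grid_K s) \<le> 1 / s + 1"
    using assms by (simp add: grid_K_def)
  also have "\<dots> \<le> 2 / s"
    using assms by (simp add: field_simps)
  finally show ?thesis .
qed

lemma two_power_square_mult_exp_le:
  fixes p L :: real
  assumes "real K \<le> 2 * p" and "1 \<le> p" and "1 \<le> L"
  shows "2 ^ (K * K) * exp (- (8 * p\<^sup>2 * L\<^sup>2)) \<le> exp (- L)"
proof -
  have "(2::real) ^ (K * K) \<le> exp 1 ^ (K * K)"
    using exp_ge_add_one_self[of 1] by (intro power_mono) auto
  also have "\<dots> = exp (real K * real K)"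
    by (simp add: exp_of_nat_mult[symmetric])
  also have "\<dots> \<le> exp (4 * p\<^sup>2)"
    using mult_mono[OF assms(1) assms(1)] assms(2) by (simp add: power2_eq_square)
  finally have "2 ^ (K * K) * exp (- (8 * p\<^sup>2 * L\<^sup>2)) \<le> exp (4 * p\<^sup>2 - 8 * p\<^sup>2 * L\<^sup>2)"
    by (simp add: exp_diff divide_inverse exp_minus)
  also have "\<dots> \<le> exp (- L)"
  proof -
    have "1 \<le> p\<^sup>2" and "1 \<le> L\<^sup>2"
      using assms(2,3) by simp_all
    then have "L\<^sup>2 \<le> p\<^sup>2 * L\<^sup>2" and "p\<^sup>2 \<le> p\<^sup>2 * L\<^sup>2"
      using mult_right_mono[of 1 "p\<^sup>2" "L\<^sup>2"] mult_left_mono[of 1 "L\<^sup>2" "p\<^sup>2"] by simp_all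
    moreover have "L \<le> L\<^sup>2"
      using mult_left_mono[OF assms(3), of L] assms(3) by (simp add: power2_eq_square)
    ultimately have "4 * p\<^sup>2 - 8 * (p\<^sup>2 * L\<^sup>2) \<le> - L" using assms(3) by linarith
    then show ?thesis by (simp add: mult.assoc)
  qed
  finally show ?thesis .
qed

lemma grid_excess_le_whp:
  fixes \<alpha> :: real and M :: "(real \<times> real) measure"
  assumes "\<alpha> \<ge> 0" and "n \<ge> 3" and M: "prob_space M" and sets_M: "sets M = sets borel"
  defines "P \<equiv> PiM {..<n} (\<lambda>_. M)" and "t \<equiv> 2 * real n powr (\<alpha> - 1/2) * ln (real n)"
  shows "{x \<in> space P. grid_excess M n x (real n powr (- \<alpha>)) \<le> t} \<in> sets P" (is "?G \<in> _")
    and "measure P {x \<in> space P. grid_excess M n x (real n powr (- \<alpha>)) \<le> t}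
           \<ge> 1 - real n powr (- 1)"
proof -
  define s where "s = real n powr (- \<alpha>)"
  define p where "p = real n powr \<alpha>"
  interpret P: prob_space P unfolding P_def by (intro prob_space_PiM M)
  have n: "real n > 0" using \<open>n \<ge> 3\<close> by simp
  have ln_n: "1 \<le> ln (real n)"
    using exp_le \<open>n \<ge> 3\<close> n by (subst ln_ge_iff) auto
  have p: "1 \<le> p"
    using \<open>n \<ge> 3\<close> \<open>\<alpha> \<ge> 0\<close> by (simp add: p_def ge_one_powr_ge_zero)
  show G_sets: "?G \<in> sets P"
    unfolding P_def using grid_excess_measurable[OF sets_M] by measurable
  have K: "real (grid_K s) \<le> 2 * p"
    using grid_K_le[of s] p n by (simp add: s_def p_def powr_minus field_simps)
  have "real n * (real n powr (\<alpha> - 1/2))\<^sup>2 = p\<^sup>2"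
    using n by (simp add: p_def powr_power powr_mult_base algebra_simps)
  then have exponent: "- 2 * real n * t\<^sup>2 = - (8 * p\<^sup>2 * (ln (real n))\<^sup>2)"
    by (simp add: t_def power_mult_distrib)
  have "space P - ?G = {x \<in> space P. grid_excess M n x s > t}"
    by (auto simp: s_def)
  also have "P.prob \<dots> \<le> 2 ^ (grid_K s * grid_K s) * exp (- 2 * real n * t\<^sup>2)"
    unfolding P_def using prob_grid_excess_gt_le[OF M sets_M] n ln_n by (simp add: t_def)
  also have "\<dots> \<le> exp (- ln (real n))"
    unfolding exponent by (rule two_power_square_mult_exp_le[OF K p ln_n])
  also have "\<dots> = real n powr (- 1)"
    using n by (simp add: powr_def)
  finally show "P.prob ?G \<ge> 1 - real n powr (- 1)"
    using P.prob_compl[OF G_sets] by simp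
qed

theorem lemma3p5:
  fixes \<alpha> :: real
  assumes "\<alpha> \<ge> 0"
  shows "\<exists>C > 0. \<exists>k :: nat. \<exists>c > 0. \<exists>N :: nat. \<forall>n \<ge> N. \<forall>\<mu> :: (real \<times> real) measure.
           prob_space \<mu> \<and> sets \<mu> = sets borel \<and> emeasure \<mu> ({0..1} \<times> {0..1}) = 1 \<longrightarrow>
           (let P = PiM {..<n} (\<lambda>_. \<mu>);
                G = {x \<in> space P. grid_excess \<mu> n x (real n powr (- \<alpha>))
                                     \<le> C * real n powr (\<alpha> - 1/2) * ln (real n) ^ k}
            in G \<in> sets P \<and> measure P G \<ge> 1 - real n powr (- c))"
proof -
  note bound = grid_excess_le_whp[OF assms]
  show ?thesis
    by (rule exI[of _ 2], rule conjI, simp, rule exI[of _ 1], rule exI[of _ 1], rule conjI, simp,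
        rule exI[of _ 3], unfold Let_def power_one_right, use bound in blast)
qed

end
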